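(* Let $(X,\mathcal{B})$ be an $\mathrm{SQS}(v)$ with $v \ge 8$ and let $B \in \mathcal{B}$. Let $p$ be the probability that a block is available. Then the expected number of available minimal repair sets for $B$ is \[E(p) = 3(r_2-1)^2p^2 + 2(r_2-1)\bigl(3r_1^2 - 12r_1r_2 + 6r_1 + 11r_2^2 - 10r_2 + 2\bigr)p^3 + (r_1 - 3r_2 + 2)^4 p^4,\] where $r_1 = \binom{v-1}{2}/3$ and $r_2 = (v-2)/2$.
   Context: A Steiner quadruple system $\mathrm{SQS}(v)$ is a $3$-$(v,4,1)$-design: a set $X$ of $v$ points with a collection $\mathcal{B}$ of $4$-subsets (blocks) such that every $3$-subset of $X$ lies in exactly one block; $r_1$ is the number of blocks containing a given point and $r_2$ the number containing a given pair of points. Reliability model: fix a block $B\in\mathcal{B}$. A repair set for $B$ is a subset $\mathcal{P}\subseteq \mathcal{B}\setminus\{B\}$ with $B \subseteq \bigcup_{B'\in\mathcal{P}} B'$; it is minimal if no proper subset is a repair set. Each block of $\mathcal{B}\setminus\{B\}$ is, independently of the others, available with probability $p\in[0,1]$; a repair set is available if all of its blocks are available. $E(p)$ is the expected number of available minimal repair sets for $B$. *)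

theory Defs
  imports Complex_Main
begin

definition SQS :: "'a set \<Rightarrow> 'a set set \<Rightarrow> nat \<Rightarrow> bool" where
  "SQS X \<B> v \<longleftrightarrow> finite X \<and> card X = v \<and>
     (\<forall>b\<in>\<B>. b \<subseteq> X \<and> card b = 4) \<and>
     (\<forall>T. T \<subseteq> X \<and> card T = 3 \<longrightarrow> (\<exists>!b. b \<in> \<B> \<and> T \<subseteq> b))"

definition repair_set :: "'a set set \<Rightarrow> 'a set \<Rightarrow> 'a set set \<Rightarrow> bool" where
  "repair_set \<B> B P \<longleftrightarrow> P \<subseteq> \<B> - {B} \<and> B \<subseteq> \<Union>P"

definition minimal_repair_set :: "'a set set \<Rightarrow> 'a set \<Rightarrow> 'a set set \<Rightarrow> bool" where
  "minimal_repair_set \<B> B P \<longleftrightarrow> repair_set \<B> B P \<and> (\<forall>Q. Q \<subset> P \<longrightarrow> \<not> repair_set \<B> B Q)"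

text \<open>Expected number of available minimal repair sets: each block of \<B> - {B} is
  independently available with probability p; the random set A of available blocks has
  probability p^|A| (1-p)^(|\<B>-{B}| - |A|), and the number of available minimal repair
  sets is the number of minimal repair sets contained in A.\<close>
definition expected_available_repair :: "'a set set \<Rightarrow> 'a set \<Rightarrow> real \<Rightarrow> real" where
  "expected_available_repair \<B> B p =
     (\<Sum>A\<in>Pow (\<B> - {B}).
        p ^ card A * (1 - p) ^ (card (\<B> - {B}) - card A) *
        real (card {P. P \<subseteq> A \<and> minimal_repair_set \<B> B P}))"

end

theory Submission
  imports Defs "HOL-Library.FuncSet"
begin

text \<open>By linearity of expectation \<open>E(p)\<close> is the sum of \<open>p ^ card P\<close> over the minimal
  repair sets \<open>P\<close>. Replacing each block \<open>b \<noteq> B\<close> by its trace \<open>b \<inter> B\<close>, a minimal repair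
  set amounts to an irredundant cover of \<open>B\<close> by traces together with a choice, for each
  trace \<open>s\<close> of the cover, of one of the \<open>N(s) = trace_count \<B> B s\<close> blocks with that trace.
  In an SQS two blocks share at most two points, so only traces of size one and two occur;
  \<open>N({x,y}) = r\<^sub>2 - 1\<close>, and counting the \<open>r\<^sub>1 - 1\<close> other blocks through \<open>x\<close> by their
  traces gives \<open>N({x}) = r\<^sub>1 - 3 r\<^sub>2 + 2\<close>. It remains to list the irredundant covers of a
  four-set by singletons and pairs: two disjoint pairs (3), a pair and two points (6), two
  overlapping pairs and a point (12), three pairs through a common point (4) and the four
  points (1).\<close>

section \<open>Sums over subsets\<close>

lemma sum_Pow_insert:
  assumes "finite A" "x \<notin> A"
  shows "(\<Sum>K\<in>Pow (insert x A). f K) = (\<Sum>K\<in>Pow A. f K) + (\<Sum>K\<in>Pow A. f (insert x K))"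
proof -
  have "inj_on (insert x) (Pow A)"
    using assms(2) by (auto intro!: inj_onI simp: insert_ident)
  moreover have "Pow A \<inter> insert x ` Pow A = {}"
    using assms(2) by auto
  ultimately show ?thesis
    unfolding Pow_insert using assms(1) by (simp add: sum.union_disjoint sum.reindex)
qed

lemma sum_Pow_superset_weight:
  fixes p :: "'b::comm_ring_1"
  assumes C: "finite C" and P: "P \<subseteq> C"
  shows "(\<Sum>A\<in>Pow C. if P \<subseteq> A then p ^ card A * (1 - p) ^ (card C - card A) else 0) = p ^ card P"
proof -
  let ?q = "\<lambda>x. if x \<in> P then 0 else 1 - p"
  have "p ^ card P = (\<Prod>x\<in>C. if x \<in> P then p else 1)"
    using P by (simp add: prod.If_cases[OF C] inf.absorb2)
  also have "\<dots> = (\<Prod>x\<in>C. p + ?q x)"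
    by (intro prod.cong) auto
  also have "\<dots> = (\<Sum>A\<in>Pow C. (\<Prod>x\<in>A. p) * (\<Prod>x\<in>C - A. ?q x))"
    by (rule prod_add[OF C])
  also have "\<dots> = (\<Sum>A\<in>Pow C. if P \<subseteq> A then p ^ card A * (1 - p) ^ (card C - card A) else 0)"
  proof (intro sum.cong refl)
    fix A assume "A \<in> Pow C"
    then have A: "A \<subseteq> C" by simp
    show "(\<Prod>x\<in>A. p) * (\<Prod>x\<in>C - A. ?q x) = (if P \<subseteq> A then p ^ card A * (1 - p) ^ (card C - card A) else 0)"
    proof (cases "P \<subseteq> A")
      case True
      then have "(\<Prod>x\<in>C - A. ?q x) = (\<Prod>x\<in>C - A. 1 - p)"
        by (intro prod.cong) auto
      with True A C show ?thesis
        by (simp add: card_Diff_subset finite_subset)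
    next
      case False
      then obtain x where "x \<in> C - A" "x \<in> P" using P by auto
      then have "(\<Prod>x\<in>C - A. ?q x) = 0"
        using C by (intro prod_zero) auto
      with False show ?thesis by simp
    qed
  qed
  finally show ?thesis ..
qed

text \<open>Linearity of expectation: each set with property \<open>Q\<close> is available with probability
  \<open>p ^ card P\<close>.\<close>
lemma sum_binomial_weight_count_subsets:
  fixes p :: real
  assumes C: "finite C" and Q: "\<And>P. Q P \<Longrightarrow> P \<subseteq> C"
  shows "(\<Sum>A\<in>Pow C. p ^ card A * (1 - p) ^ (card C - card A) * real (card {P. P \<subseteq> A \<and> Q P}))
       = (\<Sum>P | Q P. p ^ card P)"
proof -
  let ?w = "\<lambda>A. p ^ card A * (1 - p) ^ (card C - card A)"
  have "{P. Q P} \<subseteq> Pow C"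
    using Q by blast
  then have fin: "finite {P. Q P}"
    using C by (simp add: finite_subset)
  have count: "real (card {P. P \<subseteq> A \<and> Q P}) = (\<Sum>P | Q P. if P \<subseteq> A then 1 else 0)" for A
    using fin by (simp add: sum.If_cases Int_def conj_commute)
  have "(\<Sum>A\<in>Pow C. ?w A * real (card {P. P \<subseteq> A \<and> Q P}))
      = (\<Sum>A\<in>Pow C. \<Sum>P | Q P. if P \<subseteq> A then ?w A else 0)"
    unfolding count sum_distrib_left by (intro sum.cong refl) simp
  also have "\<dots> = (\<Sum>P | Q P. \<Sum>A\<in>Pow C. if P \<subseteq> A then ?w A else 0)"
    by (rule sum.swap)
  also have "\<dots> = (\<Sum>P | Q P. p ^ card P)"
    using C Q by (intro sum.cong refl) (simp add: sum_Pow_superset_weight)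
  finally show ?thesis .
qed

section \<open>Minimal repair sets and traces\<close>

definition irredundant_cover :: "'a set \<Rightarrow> 'a set set \<Rightarrow> bool" where
  "irredundant_cover B S \<longleftrightarrow> S \<subseteq> Pow B \<and> B \<subseteq> \<Union>S \<and> (\<forall>s\<in>S. \<not> B \<subseteq> \<Union>(S - {s}))"

definition trace_count :: "'a set set \<Rightarrow> 'a set \<Rightarrow> 'a set \<Rightarrow> nat" where
  "trace_count \<B> B s = card {b \<in> \<B> - {B}. b \<inter> B = s}"

lemma finite_irredundant_covers:
  assumes "finite B"
  shows "finite {S. irredundant_cover B S}"
  by (rule finite_subset[of _ "Pow (Pow B)"]) (use assms in \<open>auto simp: irredundant_cover_def\<close>)

lemma empty_not_in_irredundant_cover:
  assumes "irredundant_cover B S"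
  shows "{} \<notin> S"
proof
  assume "{} \<in> S"
  then have "\<not> B \<subseteq> \<Union>(S - {{}})"
    using assms unfolding irredundant_cover_def by blast
  moreover have "\<Union>(S - {{}}) = \<Union>S" by auto
  ultimately show False
    using assms unfolding irredundant_cover_def by simp
qed

lemma irredundant_cover_image_iff:
  assumes "inj_on f K"
  shows "irredundant_cover B (f ` K) \<longleftrightarrow>
    f ` K \<subseteq> Pow B \<and> B \<subseteq> \<Union>(f ` K) \<and> (\<forall>i\<in>K. \<not> B \<subseteq> \<Union>(f ` (K - {i})))"
proof -
  have "f ` K - {f i} = f ` (K - {i})" if "i \<in> K" for i
    using assms that by (auto simp: inj_on_eq_iff)
  then show ?thesis
    unfolding irredundant_cover_def by auto
qed

lemma irredundant_indices_subset:
  assumes "\<forall>i\<in>K. \<not> B \<subseteq> \<Union>(f ` (K - {i}))" "K' \<subseteq> K"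
  shows "\<forall>i\<in>K'. \<not> B \<subseteq> \<Union>(f ` (K' - {i}))"
proof (intro ballI notI)
  fix i assume i: "i \<in> K'" and covers: "B \<subseteq> \<Union>(f ` (K' - {i}))"
  have "\<Union>(f ` (K' - {i})) \<subseteq> \<Union>(f ` (K - {i}))"
    using assms(2) by (intro Union_mono image_mono Diff_mono) auto
  with covers have "B \<subseteq> \<Union>(f ` (K - {i}))"
    by (rule subset_trans)
  with assms i show False by blast
qed

lemma minimal_repair_set_iff_essential:
  "minimal_repair_set \<B> B P \<longleftrightarrow>
     P \<subseteq> \<B> - {B} \<and> B \<subseteq> \<Union>P \<and> (\<forall>b\<in>P. \<not> B \<subseteq> \<Union>(P - {b}))"
proof
  assume P: "minimal_repair_set \<B> B P"
  have "\<not> B \<subseteq> \<Union>(P - {b})" if "b \<in> P" for b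
  proof -
    from that have "P - {b} \<subset> P" by blast
    with P have "\<not> repair_set \<B> B (P - {b})"
      unfolding minimal_repair_set_def by blast
    moreover have "P - {b} \<subseteq> \<B> - {B}"
      using P unfolding minimal_repair_set_def repair_set_def by blast
    ultimately show ?thesis
      unfolding repair_set_def by blast
  qed
  moreover have "repair_set \<B> B P"
    using P unfolding minimal_repair_set_def by simp
  ultimately show "P \<subseteq> \<B> - {B} \<and> B \<subseteq> \<Union>P \<and> (\<forall>b\<in>P. \<not> B \<subseteq> \<Union>(P - {b}))"
    unfolding repair_set_def by blast
next
  assume P: "P \<subseteq> \<B> - {B} \<and> B \<subseteq> \<Union>P \<and> (\<forall>b\<in>P. \<not> B \<subseteq> \<Union>(P - {b}))"
  have "\<not> repair_set \<B> B Q" if "Q \<subset> P" for Q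
  proof
    assume "repair_set \<B> B Q"
    obtain b where "b \<in> P" "Q \<subseteq> P - {b}"
      using \<open>Q \<subset> P\<close> by blast
    with \<open>repair_set \<B> B Q\<close> have "B \<subseteq> \<Union>(P - {b})"
      unfolding repair_set_def by (meson Union_mono subset_trans)
    with P \<open>b \<in> P\<close> show False by blast
  qed
  moreover have "repair_set \<B> B P"
    using P unfolding repair_set_def by blast
  ultimately show "minimal_repair_set \<B> B P"
    unfolding minimal_repair_set_def by blast
qed

lemma minimal_repair_set_iff_traces:
  "minimal_repair_set \<B> B P \<longleftrightarrow>
     P \<subseteq> \<B> - {B} \<and> inj_on (\<lambda>b. b \<inter> B) P \<and> irredundant_cover B ((\<lambda>b. b \<inter> B) ` P)"
proof -
  let ?t = "\<lambda>b. b \<inter> B"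
  have covers: "B \<subseteq> \<Union>(?t ` Q) \<longleftrightarrow> B \<subseteq> \<Union>Q" for Q
    by auto
  have inj: "inj_on ?t P" if "B \<subseteq> \<Union>P" "\<forall>b\<in>P. \<not> B \<subseteq> \<Union>(P - {b})"
  proof (rule inj_onI, rule ccontr)
    fix b1 b2 assume b: "b1 \<in> P" "b2 \<in> P" "b1 \<inter> B = b2 \<inter> B" "b1 \<noteq> b2"
    have "?t ` P \<subseteq> ?t ` (P - {b1})"
    proof
      fix s assume "s \<in> ?t ` P"
      then obtain b where "b \<in> P" "s = ?t b" by blast
      with b show "s \<in> ?t ` (P - {b1})" by (cases "b = b1") auto
    qed
    then have "\<Union>(?t ` P) \<subseteq> \<Union>(?t ` (P - {b1}))"
      by (rule Union_mono)
    with iffD2[OF covers that(1)] have "B \<subseteq> \<Union>(?t ` (P - {b1}))"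
      by (rule subset_trans)
    then have "B \<subseteq> \<Union>(P - {b1})"
      by (rule iffD1[OF covers])
    with that(2) b(1) show False by blast
  qed
  have "irredundant_cover B (?t ` P) \<longleftrightarrow> B \<subseteq> \<Union>P \<and> (\<forall>b\<in>P. \<not> B \<subseteq> \<Union>(P - {b}))"
    if "inj_on ?t P"
    using that by (simp add: irredundant_cover_image_iff covers image_subset_iff)
  with inj show ?thesis
    unfolding minimal_repair_set_iff_essential by blast
qed

text \<open>Such sets \<open>P\<close> are the images \<open>f ` S\<close> of the choice functions \<open>f\<close> picking one point
  in each fibre of \<open>t\<close> over \<open>S\<close>.\<close>
lemma card_injective_lifts:
  assumes "finite S"
  shows "card {P. P \<subseteq> C \<and> inj_on t P \<and> t ` P = S} = (\<Prod>s\<in>S. card {b \<in> C. t b = s})"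
proof -
  have "bij_betw (\<lambda>f. f ` S) (PiE S (\<lambda>s. {b \<in> C. t b = s})) {P. P \<subseteq> C \<and> inj_on t P \<and> t ` P = S}"
  proof (rule bij_betwI')
    fix f g assume f: "f \<in> PiE S (\<lambda>s. {b \<in> C. t b = s})" and g: "g \<in> PiE S (\<lambda>s. {b \<in> C. t b = s})"
    show "f ` S = g ` S \<longleftrightarrow> f = g"
    proof
      assume fg: "f ` S = g ` S"
      show "f = g"
      proof (rule PiE_ext[OF f g])
        fix s assume s: "s \<in> S"
        then obtain s' where "s' \<in> S" "f s = g s'"
          using fg by (metis image_eqI imageE)
        moreover have "t (f s) = s" "t (g s') = s'"
          using f g s \<open>s' \<in> S\<close> by auto
        ultimately show "f s = g s" by simp
      qed
    qed simp
  next
    fix f assume "f \<in> PiE S (\<lambda>s. {b \<in> C. t b = s})"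
    then have "\<And>s. s \<in> S \<Longrightarrow> t (f s) = s \<and> f s \<in> C" by auto
    then show "f ` S \<in> {P. P \<subseteq> C \<and> inj_on t P \<and> t ` P = S}"
      by (force intro!: inj_onI simp: image_image)
  next
    fix P assume "P \<in> {P. P \<subseteq> C \<and> inj_on t P \<and> t ` P = S}"
    then have P: "P \<subseteq> C" "inj_on t P" "t ` P = S" by auto
    define f where "f = restrict (the_inv_into P t) S"
    have "f \<in> PiE S (\<lambda>s. {b \<in> C. t b = s})"
      unfolding f_def using P by (auto simp: f_the_inv_into_f the_inv_into_into)
    moreover have "P = f ` S"
      unfolding f_def using the_inv_into_onto[OF P(2)] P(3) by simp
    ultimately show "\<exists>f\<in>PiE S (\<lambda>s. {b \<in> C. t b = s}). P = f ` S" by blast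
  qed
  then have "card {P. P \<subseteq> C \<and> inj_on t P \<and> t ` P = S} = card (PiE S (\<lambda>s. {b \<in> C. t b = s}))"
    by (simp add: bij_betw_same_card)
  also have "\<dots> = (\<Prod>s\<in>S. card {b \<in> C. t b = s})"
    using assms by (rule card_PiE)
  finally show ?thesis .
qed

lemma sum_minimal_repair_sets:
  fixes p :: real
  assumes "finite \<B>" "finite B"
  shows "(\<Sum>P | minimal_repair_set \<B> B P. p ^ card P) =
         (\<Sum>S | irredundant_cover B S. p ^ card S * (\<Prod>s\<in>S. real (trace_count \<B> B s)))"
proof -
  let ?t = "\<lambda>b. b \<inter> B"
  let ?C = "\<B> - {B}"
  let ?M = "{P. minimal_repair_set \<B> B P}"
  let ?lifts = "\<lambda>S. {P. P \<subseteq> ?C \<and> inj_on ?t P \<and> ?t ` P = S}"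
  have "?M \<subseteq> Pow ?C"
    by (auto simp: minimal_repair_set_iff_essential)
  then have "finite ?M"
    using assms(1) by (simp add: finite_subset)
  then have "(\<Sum>P\<in>?M. p ^ card P) =
      (\<Sum>S | irredundant_cover B S. \<Sum>P \<in> {P \<in> ?M. ?t ` P = S}. p ^ card P)"
    by (rule sum.group[symmetric])
      (use assms(2) in \<open>auto simp: finite_irredundant_covers minimal_repair_set_iff_traces\<close>)
  also have "\<dots> = (\<Sum>S | irredundant_cover B S. \<Sum>P \<in> ?lifts S. p ^ card S)"
  proof (rule sum.cong[OF refl], rule sum.cong)
    fix S assume "S \<in> {S. irredundant_cover B S}"
    then show "{P \<in> ?M. ?t ` P = S} = ?lifts S"
      by (auto simp: minimal_repair_set_iff_traces)
    fix P assume "P \<in> ?lifts S"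
    then show "p ^ card P = p ^ card S"
      by (auto simp: card_image)
  qed
  also have "\<dots> = (\<Sum>S | irredundant_cover B S. p ^ card S * (\<Prod>s\<in>S. real (trace_count \<B> B s)))"
  proof (rule sum.cong[OF refl])
    fix S assume "S \<in> {S. irredundant_cover B S}"
    then have "S \<subseteq> Pow B"
      by (simp add: irredundant_cover_def)
    with assms(2) have "finite S"
      by (simp add: finite_subset)
    then show "(\<Sum>P \<in> ?lifts S. p ^ card S) = p ^ card S * (\<Prod>s\<in>S. real (trace_count \<B> B s))"
      by (simp add: card_injective_lifts trace_count_def)
  qed
  finally show ?thesis .
qed

lemma expected_available_repair_eq_sum:
  assumes "finite \<B>"
  shows "expected_available_repair \<B> B p = (\<Sum>P | minimal_repair_set \<B> B P. p ^ card P)"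
  unfolding expected_available_repair_def
  by (rule sum_binomial_weight_count_subsets) (use assms in \<open>auto simp: minimal_repair_set_def repair_set_def\<close>)

section \<open>Block counts in a Steiner quadruple system\<close>

lemma SQS_finite:
  assumes "SQS X \<B> v"
  shows "finite X" "finite \<B>"
proof -
  show "finite X"
    using assms by (simp add: SQS_def)
  moreover have "\<B> \<subseteq> Pow X"
    using assms by (auto simp: SQS_def)
  ultimately show "finite \<B>"
    by (simp add: finite_subset)
qed

lemma SQS_block:
  assumes "SQS X \<B> v" "b \<in> \<B>"
  shows "b \<subseteq> X" "card b = 4" "finite b"
proof -
  show "b \<subseteq> X" "card b = 4"
    using assms by (simp_all add: SQS_def)
  then show "finite b"
    by (simp add: card_ge_0_finite)
qed

lemma SQS_ex1_block:
  assumes "SQS X \<B> v" "T \<subseteq> X" "card T = 3"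
  shows "\<exists>!b. b \<in> \<B> \<and> T \<subseteq> b"
  using assms by (simp add: SQS_def)

lemma SQS_block_exists:
  assumes "SQS X \<B> v" "T \<subseteq> X" "card T = 3"
  shows "\<exists>b\<in>\<B>. T \<subseteq> b"
  using ex1_implies_ex[OF SQS_ex1_block[OF assms]] by blast

lemma SQS_block_unique:
  assumes "SQS X \<B> v" "b1 \<in> \<B>" "b2 \<in> \<B>" "T \<subseteq> b1" "T \<subseteq> b2" "card T = 3"
  shows "b1 = b2"
proof -
  have "T \<subseteq> X"
    using SQS_block(1)[OF assms(1,2)] assms(4) by (rule subset_trans[rotated])
  with assms show ?thesis
    using SQS_ex1_block by metis
qed

lemma SQS_block_eq_if_three_common:
  assumes "SQS X \<B> v" "b1 \<in> \<B>" "b2 \<in> \<B>" "3 \<le> card (b1 \<inter> b2)"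
  shows "b1 = b2"
proof -
  obtain T where "T \<subseteq> b1 \<inter> b2" "card T = 3"
    using obtain_subset_with_card_n[OF assms(4)] by blast
  with assms(1-3) show ?thesis
    using SQS_block_unique by (meson le_infE)
qed

lemma card_supersets_with_card:
  assumes "finite Y" "T \<subseteq> Y" "card T \<le> k"
  shows "card {U. T \<subseteq> U \<and> U \<subseteq> Y \<and> card U = k} = (card Y - card T) choose (k - card T)"
proof -
  have T: "finite T"
    using assms(1,2) by (rule finite_subset[rotated])
  have "bij_betw (\<lambda>U. U - T) {U. T \<subseteq> U \<and> U \<subseteq> Y \<and> card U = k} {W. W \<subseteq> Y - T \<and> card W = k - card T}"
  proof (rule bij_betwI[where g = "\<lambda>W. W \<union> T"])
    show "(\<lambda>U. U - T) \<in> {U. T \<subseteq> U \<and> U \<subseteq> Y \<and> card U = k} \<rightarrow> {W. W \<subseteq> Y - T \<and> card W = k - card T}"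
      using T by (auto simp: card_Diff_subset)
    show "(\<lambda>W. W \<union> T) \<in> {W. W \<subseteq> Y - T \<and> card W = k - card T} \<rightarrow> {U. T \<subseteq> U \<and> U \<subseteq> Y \<and> card U = k}"
    proof
      fix W assume W: "W \<in> {W. W \<subseteq> Y - T \<and> card W = k - card T}"
      then have "finite W"
        using assms(1) by (auto intro: finite_subset)
      moreover have "W \<inter> T = {}"
        using W by blast
      ultimately have "card (W \<union> T) = card W + card T"
        using T by (simp add: card_Un_disjoint)
      with W assms(2,3) show "W \<union> T \<in> {U. T \<subseteq> U \<and> U \<subseteq> Y \<and> card U = k}"
        by auto
    qed
  qed auto
  then have "card {U. T \<subseteq> U \<and> U \<subseteq> Y \<and> card U = k} = card {W. W \<subseteq> Y - T \<and> card W = k - card T}"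
    by (rule bij_betw_same_card)
  also have "\<dots> = (card Y - card T) choose (k - card T)"
    using assms(1,2) T by (simp add: n_subsets card_Diff_subset)
  finally show ?thesis .
qed

text \<open>Double counting the triples \<open>U \<supseteq> T\<close>: each lies in exactly one block.\<close>
lemma SQS_card_blocks_containing:
  assumes S: "SQS X \<B> v" and T: "T \<subseteq> X" "card T \<le> 3"
  shows "card {b \<in> \<B>. T \<subseteq> b} * ((4 - card T) choose (3 - card T)) = (v - card T) choose (3 - card T)"
proof -
  let ?R = "{b \<in> \<B>. T \<subseteq> b}"
  let ?U = "\<lambda>Y. {U. T \<subseteq> U \<and> U \<subseteq> Y \<and> card U = 3}"
  have "?U X = (\<Union>b\<in>?R. ?U b)"
  proof
    show "?U X \<subseteq> (\<Union>b\<in>?R. ?U b)"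
    proof
      fix U assume U: "U \<in> ?U X"
      then obtain b where "b \<in> \<B>" "U \<subseteq> b"
        using SQS_block_exists[OF S] by blast
      with U show "U \<in> (\<Union>b\<in>?R. ?U b)" by blast
    qed
    show "(\<Union>b\<in>?R. ?U b) \<subseteq> ?U X"
      using SQS_block(1)[OF S] by blast
  qed
  also have "card (\<Union>b\<in>?R. ?U b) = (\<Sum>b\<in>?R. card (?U b))"
  proof (rule card_UN_disjoint)
    show "finite ?R"
      using SQS_finite(2)[OF S] by simp
    show "\<forall>b\<in>?R. finite (?U b)"
      using SQS_block(3)[OF S] by (auto intro: finite_subset[of _ "Pow _"])
    show "\<forall>b1\<in>?R. \<forall>b2\<in>?R. b1 \<noteq> b2 \<longrightarrow> ?U b1 \<inter> ?U b2 = {}"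
      using SQS_block_unique[OF S] by blast
  qed
  also have "\<dots> = (\<Sum>b\<in>?R. (4 - card T) choose (3 - card T))"
    using SQS_block[OF S] T(2) by (intro sum.cong refl) (simp add: card_supersets_with_card)
  finally show ?thesis
    using SQS_finite(1)[OF S] SQS_def[of X \<B> v] S T by (simp add: card_supersets_with_card)
qed

lemma SQS_card_blocks_through_point:
  assumes "SQS X \<B> v" "x \<in> X"
  shows "3 * card {b \<in> \<B>. x \<in> b} = (v - 1) choose 2"
  using SQS_card_blocks_containing[OF assms(1), of "{x}"] assms(2)
  by (simp add: choose_two mult.commute)

lemma SQS_card_blocks_through_pair:
  assumes "SQS X \<B> v" "x \<in> X" "y \<in> X" "x \<noteq> y"
  shows "2 * card {b \<in> \<B>. x \<in> b \<and> y \<in> b} = v - 2"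
  using SQS_card_blocks_containing[OF assms(1), of "{x, y}"] assms(2-4)
  by (simp add: mult.commute)

lemma SQS_trace_count_large:
  assumes "SQS X \<B> v" "B \<in> \<B>" "3 \<le> card s"
  shows "trace_count \<B> B s = 0"
proof -
  have "b = B" if "b \<in> \<B>" "b \<inter> B = s" for b
    using SQS_block_eq_if_three_common[OF assms(1) that(1) assms(2)] that(2) assms(3) by simp
  then have "{b \<in> \<B> - {B}. b \<inter> B = s} = {}"
    by blast
  then show ?thesis
    unfolding trace_count_def by (metis card.empty)
qed

lemma SQS_trace_count_pair:
  assumes S: "SQS X \<B> v" and B: "B \<in> \<B>" and xy: "x \<in> B" "y \<in> B" "x \<noteq> y"
  shows "real (trace_count \<B> B {x, y}) = (real v - 2) / 2 - 1"
proof -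
  let ?R = "{b \<in> \<B>. x \<in> b \<and> y \<in> b}"
  have "b \<inter> B = {x, y}" if b: "b \<in> ?R - {B}" for b
  proof -
    have "3 > card (b \<inter> B)"
      using SQS_block_eq_if_three_common[OF S _ B] b by force
    have "finite (b \<inter> B)"
      using SQS_block(3)[OF S B] by simp
    moreover have "{x, y} \<subseteq> b \<inter> B"
      using b xy by blast
    moreover have "card (b \<inter> B) \<le> card {x, y}"
      using \<open>3 > card (b \<inter> B)\<close> xy(3) by simp
    ultimately show ?thesis
      using card_seteq by blast
  qed
  then have traces: "{b \<in> \<B> - {B}. b \<inter> B = {x, y}} = ?R - {B}"
    by blast
  have "B \<in> ?R" "finite ?R"
    using B xy SQS_finite(2)[OF S] by auto
  then have "card ?R \<ge> 1"
    using card_gt_0_iff[of ?R] by (auto simp: Suc_le_eq)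
  with \<open>B \<in> ?R\<close> have "real (card (?R - {B})) = real (card ?R) - 1"
    by (simp add: of_nat_diff)
  moreover have "2 * real (card ?R) = real v - 2"
  proof -
    have pairs: "2 * card ?R = v - 2"
      using SQS_card_blocks_through_pair[OF S] SQS_block(1)[OF S B] xy by blast
    with \<open>card ?R \<ge> 1\<close> have "v \<ge> 2"
      by arith
    moreover have "real (2 * card ?R) = real (v - 2)"
      using pairs by (rule arg_cong)
    ultimately show ?thesis
      by (simp add: of_nat_diff)
  qed
  ultimately show ?thesis
    unfolding trace_count_def traces by (simp add: field_simps)
qed

lemma card_blocks_through_by_trace:
  assumes "finite \<B>" "finite B" "x \<in> B"
  shows "card {b \<in> \<B> - {B}. x \<in> b} = (\<Sum>s | s \<subseteq> B \<and> x \<in> s. trace_count \<B> B s)"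
proof -
  let ?S = "{b \<in> \<B> - {B}. x \<in> b}"
  have "finite {s. s \<subseteq> B \<and> x \<in> s}"
    by (rule finite_subset[of _ "Pow B"]) (use assms(2) in auto)
  then have "card ?S = (\<Sum>s | s \<subseteq> B \<and> x \<in> s. \<Sum>b \<in> {b \<in> ?S. b \<inter> B = s}. 1)"
    using assms by (subst sum.group) auto
  also have "\<dots> = (\<Sum>s | s \<subseteq> B \<and> x \<in> s. trace_count \<B> B s)"
  proof (rule sum.cong[OF refl])
    fix s assume "s \<in> {s. s \<subseteq> B \<and> x \<in> s}"
    then have "{b \<in> ?S. b \<inter> B = s} = {b \<in> \<B> - {B}. b \<inter> B = s}"
      by blast
    then show "(\<Sum>b \<in> {b \<in> ?S. b \<inter> B = s}. 1) = trace_count \<B> B s"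
      by (simp add: trace_count_def)
  qed
  finally show ?thesis .
qed

lemma three_le_card_if_not_point_or_pair:
  assumes "finite s" "x \<in> s" "s \<noteq> {x}" "\<And>y. s \<noteq> {x, y}"
  shows "3 \<le> card s"
proof (rule ccontr)
  assume "\<not> 3 \<le> card s"
  then have "card (s - {x}) \<le> 1"
    using assms(2) by simp
  then consider "card (s - {x}) = 0" | "card (s - {x}) = 1"
    by linarith
  then show False
  proof cases
    case 1
    then have "s - {x} = {}"
      using assms(1) by simp
    with assms(2,3) show False by blast
  next
    case 2
    then obtain y where "s - {x} = {y}"
      by (rule card_1_singletonE)
    with assms(2) assms(4)[of y] show False by blast
  qed
qed

lemma SQS_card_blocks_through_point_by_trace:
  assumes S: "SQS X \<B> v" and B: "B \<in> \<B>" and x: "x \<in> B"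
  shows "card {b \<in> \<B> - {B}. x \<in> b} = trace_count \<B> B {x} + (\<Sum>y \<in> B - {x}. trace_count \<B> B {x, y})"
proof -
  let ?pairs = "(\<lambda>y. {x, y}) ` (B - {x})"
  have fin: "finite \<B>" "finite B"
    using SQS_finite(2)[OF S] SQS_block(3)[OF S B] .
  have "card {b \<in> \<B> - {B}. x \<in> b} = (\<Sum>s | s \<subseteq> B \<and> x \<in> s. trace_count \<B> B s)"
    using fin x by (rule card_blocks_through_by_trace)
  also have "\<dots> = (\<Sum>s \<in> insert {x} ?pairs. trace_count \<B> B s)"
  proof (rule sum.mono_neutral_right)
    show "finite {s. s \<subseteq> B \<and> x \<in> s}"
      by (rule finite_subset[of _ "Pow B"]) (use fin(2) in auto)
    show "insert {x} ?pairs \<subseteq> {s. s \<subseteq> B \<and> x \<in> s}"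
      using x by auto
    show "\<forall>s \<in> {s. s \<subseteq> B \<and> x \<in> s} - insert {x} ?pairs. trace_count \<B> B s = 0"
    proof
      fix s assume s: "s \<in> {s. s \<subseteq> B \<and> x \<in> s} - insert {x} ?pairs"
      then have "finite s"
        using fin(2) by (auto intro: finite_subset)
      with s have "3 \<le> card s"
        by (intro three_le_card_if_not_point_or_pair) auto
      then show "trace_count \<B> B s = 0"
        using SQS_trace_count_large[OF S B] by blast
    qed
  qed
  also have "\<dots> = trace_count \<B> B {x} + (\<Sum>y \<in> B - {x}. trace_count \<B> B {x, y})"
  proof -
    have "inj_on (\<lambda>y. {x, y}) (B - {x})"
      by (auto intro!: inj_onI simp: doubleton_eq_iff)
    moreover have "{x} \<notin> ?pairs"
      by auto
    ultimately show ?thesis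
      using fin(2) by (simp add: sum.reindex)
  qed
  finally show ?thesis .
qed

lemma SQS_trace_count_point:
  assumes S: "SQS X \<B> v" and B: "B \<in> \<B>" and x: "x \<in> B"
  shows "real (trace_count \<B> B {x}) = real ((v - 1) choose 2) / 3 - 3 * ((real v - 2) / 2) + 2"
proof -
  have "card (B - {x}) = 3"
    using SQS_block(2,3)[OF S B] x by simp
  moreover have "real (\<Sum>y \<in> B - {x}. trace_count \<B> B {x, y}) = (\<Sum>y \<in> B - {x}. (real v - 2) / 2 - 1)"
    unfolding of_nat_sum using SQS_trace_count_pair[OF S B x] by (intro sum.cong) auto
  ultimately have "real (\<Sum>y \<in> B - {x}. trace_count \<B> B {x, y}) = 3 * ((real v - 2) / 2 - 1)"
    by simp
  moreover have "{b \<in> \<B>. x \<in> b} = insert B {b \<in> \<B> - {B}. x \<in> b}"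
    using B x by blast
  then have "real (card {b \<in> \<B>. x \<in> b}) = 1 + real (card {b \<in> \<B> - {B}. x \<in> b})"
    using SQS_finite(2)[OF S] by simp
  moreover have "3 * card {b \<in> \<B>. x \<in> b} = (v - 1) choose 2"
    using SQS_card_blocks_through_point[OF S] SQS_block(1)[OF S B] x by blast
  then have "3 * real (card {b \<in> \<B>. x \<in> b}) = real ((v - 1) choose 2)"
    by (metis of_nat_mult of_nat_numeral)
  ultimately show ?thesis
    unfolding SQS_card_blocks_through_point_by_trace[OF S B x] of_nat_add by argo
qed

section \<open>Irredundant covers of a four-element set\<close>

lemma sum_irredundant_covers_reindex:
  assumes "finite B" "finite I" "inj_on f I"
    and vanish: "\<And>S. irredundant_cover B S \<Longrightarrow> \<not> S \<subseteq> f ` I \<Longrightarrow> w S = 0"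
  shows "(\<Sum>S | irredundant_cover B S. w S) =
         (\<Sum>K\<in>Pow I. if irredundant_cover B (f ` K) then w (f ` K) else 0)"
proof -
  have "(\<Sum>S | irredundant_cover B S. w S) = (\<Sum>S \<in> {S \<in> Pow (f ` I). irredundant_cover B S}. w S)"
    using vanish by (intro sum.mono_neutral_right finite_irredundant_covers[OF assms(1)]) auto
  also have "\<dots> = (\<Sum>S \<in> Pow (f ` I). if irredundant_cover B S then w S else 0)"
    using assms(2) by (intro sum.inter_filter) simp
  also have "\<dots> = (\<Sum>K\<in>Pow I. if irredundant_cover B (f ` K) then w (f ` K) else 0)"
    using bij_betw_image_Pow[OF inj_on_imp_bij_betw[OF assms(3)]] by (rule sum.reindex_bij_betw[symmetric])
  finally show ?thesis .
qed

fun pruned_subset_sum :: "('b set \<Rightarrow> bool) \<Rightarrow> ('b set \<Rightarrow> 'c::comm_monoid_add) \<Rightarrow> 'b set \<Rightarrow> 'b list \<Rightarrow> 'c" where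
  "pruned_subset_sum Q f J [] = f J"
| "pruned_subset_sum Q f J (x # xs) =
     pruned_subset_sum Q f J xs + (if Q (insert x J) then pruned_subset_sum Q f (insert x J) xs else 0)"

text \<open>Summing over the subsets of a list while cutting off every branch on which the
  hereditary property \<open>Q\<close> already fails keeps the exhaustive enumeration below small.\<close>
lemma pruned_subset_sum_eq:
  assumes hereditary: "\<And>K K'. Q K \<Longrightarrow> K' \<subseteq> K \<Longrightarrow> Q K'"
    and "distinct xs" "set xs \<inter> J = {}" "Q J"
  shows "pruned_subset_sum Q f J xs = (\<Sum>K\<in>Pow (set xs). if Q (J \<union> K) then f (J \<union> K) else 0)"
  using assms(2-4)
proof (induction xs arbitrary: J)
  case Nil
  then show ?case by simp
next
  case (Cons x xs)
  have split: "(\<Sum>K\<in>Pow (set (x # xs)). if Q (J \<union> K) then f (J \<union> K) else 0) =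
      (\<Sum>K\<in>Pow (set xs). if Q (J \<union> K) then f (J \<union> K) else 0) +
      (\<Sum>K\<in>Pow (set xs). if Q (insert x J \<union> K) then f (insert x J \<union> K) else 0)"
  proof -
    have "J \<union> insert x K = insert x J \<union> K" for K
      by blast
    with Cons.prems(1) show ?thesis
      by (simp add: sum_Pow_insert del: Un_insert_left Un_insert_right cong: if_cong)
  qed
  show ?case
  proof (cases "Q (insert x J)")
    case True
    then show ?thesis
      using Cons by (simp only: split pruned_subset_sum.simps) simp
  next
    case False
    then have "\<not> Q (insert x J \<union> K)" for K
      using hereditary by blast
    with False show ?thesis
      using Cons by (simp only: split pruned_subset_sum.simps) simp
  qed
qed

text \<open>Indices \<open>0..3\<close> are the singletons and \<open>4..9\<close> the pairs of \<open>{a, b, c, d}\<close>.\<close>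
definition small_subset :: "'a \<Rightarrow> 'a \<Rightarrow> 'a \<Rightarrow> 'a \<Rightarrow> nat \<Rightarrow> 'a set" where
  "small_subset a b c d i =
    (if i = 0 then {a} else if i = 1 then {b} else if i = 2 then {c} else if i = 3 then {d}
     else if i = 4 then {a, b} else if i = 5 then {a, c} else if i = 6 then {a, d}
     else if i = 7 then {b, c} else if i = 8 then {b, d} else {c, d})"

lemma small_subset_simps:
  "small_subset a b c d 0 = {a}" "small_subset a b c d 1 = {b}" "small_subset a b c d (Suc 0) = {b}"
  "small_subset a b c d 2 = {c}" "small_subset a b c d 3 = {d}"
  "small_subset a b c d 4 = {a, b}" "small_subset a b c d 5 = {a, c}" "small_subset a b c d 6 = {a, d}"
  "small_subset a b c d 7 = {b, c}" "small_subset a b c d 8 = {b, d}" "small_subset a b c d 9 = {c, d}"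
  by (simp_all add: small_subset_def)

lemma small_subset_subset: "small_subset a b c d i \<subseteq> {a, b, c, d}"
  by (simp add: small_subset_def)

lemma atLeastLessThan_ten: "{0..<10} = set [0, 1, 2, 3, 4, 5, 6, 7, 8, 9 :: nat]"
  by auto

lemma small_subset_image:
  "small_subset a b c d ` {0..<10} = {{a}, {b}, {c}, {d}, {a, b}, {a, c}, {a, d}, {b, c}, {b, d}, {c, d}}"
  by (simp add: atLeastLessThan_ten small_subset_simps)

lemma inj_on_small_subset:
  assumes "distinct [a, b, c, d]"
  shows "inj_on (small_subset a b c d) {0..<10}"
  using assms unfolding inj_on_def atLeastLessThan_ten
  by (simp add: small_subset_simps doubleton_eq_iff insert_eq_iff) blast

lemma small_subset_surj:
  assumes "s \<subseteq> {a, b, c, d}" "s \<noteq> {}" "card s \<le> 2"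
  shows "s \<in> small_subset a b c d ` {0..<10}"
proof -
  have "finite s"
    using assms(1) by (rule finite_subset) simp
  with assms(2,3) consider "card s = 1" | "card s = 2"
    by (metis One_nat_def card_0_eq le_Suc_eq le_zero_eq numeral_2_eq_2)
  then show ?thesis
  proof cases
    case 1
    then obtain x where "s = {x}" by (rule card_1_singletonE)
    with assms(1) show ?thesis
      unfolding small_subset_image by auto
  next
    case 2
    then obtain x y where "s = {x, y}" "x \<noteq> y" by (auto simp: card_2_iff)
    with assms(1) show ?thesis
      unfolding small_subset_image by (auto simp: insert_commute)
  qed
qed

lemma three_le_card_if_not_small_subset:
  assumes "irredundant_cover {a, b, c, d} S" "s \<in> S" "s \<notin> small_subset a b c d ` {0..<10}"
  shows "3 \<le> card s"
proof -
  have "s \<subseteq> {a, b, c, d}"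
    using assms(1,2) by (auto simp: irredundant_cover_def)
  moreover have "s \<noteq> {}"
    using empty_not_in_irredundant_cover[OF assms(1)] assms(2) by blast
  ultimately show ?thesis
    using small_subset_surj[of s a b c d] assms(3) by linarith
qed

lemma sum_irredundant_small_covers:
  fixes n m p :: "'b::comm_ring_1"
  assumes "distinct [a, b, c, d]"
  shows "(\<Sum>K\<in>Pow {0..<10}. if irredundant_cover {a, b, c, d} (small_subset a b c d ` K)
            then p ^ card K * (\<Prod>i\<in>K. if i < 4 then n else m) else 0)
       = 3 * m^2 * p^2 + (6*m*n^2 + 12*m^2*n + 4*m^3) * p^3 + n^4 * p^4"
proof -
  let ?f = "small_subset a b c d"
  let ?Q = "\<lambda>K. \<forall>i\<in>K. \<not> {a, b, c, d} \<subseteq> \<Union>(?f ` (K - {i}))"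
  let ?w = "\<lambda>K. if {a, b, c, d} \<subseteq> \<Union>(?f ` K) then p ^ card K * (\<Prod>i\<in>K. if i < 4 then n else m) else 0"
  have "(\<Sum>K\<in>Pow {0..<10}. if irredundant_cover {a, b, c, d} (?f ` K)
            then p ^ card K * (\<Prod>i\<in>K. if i < 4 then n else m) else 0)
      = (\<Sum>K\<in>Pow (set [0, 1, 2, 3, 4, 5, 6, 7, 8, 9]). if ?Q ({} \<union> K) then ?w ({} \<union> K) else 0)"
  proof (rule sum.cong)
    fix K assume "K \<in> Pow (set [0, 1, 2, 3, 4, 5, 6, 7, 8, 9 :: nat])"
    then have "K \<subseteq> {0..<10}"
      by (simp only: atLeastLessThan_ten Pow_iff)
    with inj_on_small_subset[OF assms] have inj: "inj_on ?f K"
      by (rule inj_on_subset)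
    have "?f ` K \<subseteq> Pow {a, b, c, d}"
      by (simp add: image_subset_iff small_subset_subset)
    moreover have "(if P \<and> C \<and> Q then x else 0) = (if Q then if C then x else 0 else 0)" if P
      for P C Q and x :: 'b
      using that by simp
    ultimately show "(if irredundant_cover {a, b, c, d} (?f ` K)
            then p ^ card K * (\<Prod>i\<in>K. if i < 4 then n else m) else 0) = (if ?Q ({} \<union> K) then ?w ({} \<union> K) else 0)"
      unfolding irredundant_cover_image_iff[OF inj] Un_empty_left by blast
  qed (simp only: atLeastLessThan_ten)
  also have "\<dots> = pruned_subset_sum ?Q ?w {} [0, 1, 2, 3, 4, 5, 6, 7, 8, 9]"
  proof (rule pruned_subset_sum_eq[symmetric])
    show "?Q K'" if "?Q K" "K' \<subseteq> K" for K K'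
      using that by (rule irredundant_indices_subset)
  qed auto
  also have "\<dots> = 3 * m^2 * p^2 + (6*m*n^2 + 12*m^2*n + 4*m^3) * p^3 + n^4 * p^4"
  proof -
    have "a \<noteq> b" "a \<noteq> c" "a \<noteq> d" "b \<noteq> c" "b \<noteq> d" "c \<noteq> d"
         "b \<noteq> a" "c \<noteq> a" "d \<noteq> a" "c \<noteq> b" "d \<noteq> b" "d \<noteq> c"
      using assms by auto
    \<comment> \<open>\<open>ex_disj_distrib\<close> lets \<open>simp\<close> decide each irredundancy test, so the pruning takes effect.\<close>
    then show ?thesis
      apply (simp add: small_subset_simps ex_disj_distrib insert_Diff_if split del: if_split)
      apply (simp add: algebra_simps power2_eq_square power3_eq_cube power4_eq_xxxx)
      done
  qed
  finally show ?thesis .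
qed

lemma sum_irredundant_covers_card4:
  fixes N :: "'a set \<Rightarrow> 'b::comm_ring_1"
  assumes "card B = 4"
    and point: "\<And>x. x \<in> B \<Longrightarrow> N {x} = n"
    and pair: "\<And>x y. x \<in> B \<Longrightarrow> y \<in> B \<Longrightarrow> x \<noteq> y \<Longrightarrow> N {x, y} = m"
    and large: "\<And>s. s \<subseteq> B \<Longrightarrow> 3 \<le> card s \<Longrightarrow> N s = 0"
  shows "(\<Sum>S | irredundant_cover B S. p ^ card S * (\<Prod>s\<in>S. N s))
       = 3 * m^2 * p^2 + (6*m*n^2 + 12*m^2*n + 4*m^3) * p^3 + n^4 * p^4"
proof -
  have "\<exists>a b c d. B = {a, b, c, d} \<and> distinct [a, b, c, d]"
    using assms(1) by (auto simp: card_Suc_eq numeral_eq_Suc)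
  then obtain a b c d where B: "B = {a, b, c, d}" and dist: "distinct [a, b, c, d]"
    by blast
  let ?f = "small_subset a b c d"
  let ?w = "\<lambda>S. p ^ card S * (\<Prod>s\<in>S. N s)"
  have fin: "finite B"
    using assms(1) by (simp add: card_ge_0_finite)
  have weight: "N (?f i) = (if i < 4 then n else m)" if "i \<in> {0..<10}" for i
  proof -
    from that have "i \<in> set [0, 1, 2, 3, 4, 5, 6, 7, 8, 9]"
      by (simp only: atLeastLessThan_ten)
    then show ?thesis
      using point pair dist unfolding B by (auto simp: small_subset_simps)
  qed
  have vanish: "?w S = 0" if S: "irredundant_cover B S" "\<not> S \<subseteq> ?f ` {0..<10}" for S
  proof -
    obtain s where s: "s \<in> S" "s \<notin> ?f ` {0..<10}"
      using S(2) by blast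
    have "S \<subseteq> Pow B"
      using S(1) by (simp add: irredundant_cover_def)
    with s(1) have "s \<subseteq> B" "finite S"
      using fin by (auto intro: finite_subset)
    moreover have "3 \<le> card s"
      by (rule three_le_card_if_not_small_subset[OF S(1)[unfolded B] s])
    ultimately have "N s = 0"
      by (intro large)
    with s(1) \<open>finite S\<close> have "(\<Prod>s\<in>S. N s) = 0"
      by (intro prod_zero) auto
    then show ?thesis
      by simp
  qed
  have "(\<Sum>S | irredundant_cover B S. ?w S) =
      (\<Sum>K\<in>Pow {0..<10}. if irredundant_cover B (?f ` K) then ?w (?f ` K) else 0)"
    using fin inj_on_small_subset[OF dist] vanish by (intro sum_irredundant_covers_reindex) auto
  also have "\<dots> = (\<Sum>K\<in>Pow {0..<10}. if irredundant_cover B (?f ` K)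
      then p ^ card K * (\<Prod>i\<in>K. if i < 4 then n else m) else 0)"
  proof (rule sum.cong[OF refl])
    fix K :: "nat set" assume "K \<in> Pow {0..<10}"
    then have "inj_on ?f K"
      using inj_on_small_subset[OF dist] by (auto intro: inj_on_subset)
    then have "card (?f ` K) = card K" "(\<Prod>s\<in>?f ` K. N s) = (\<Prod>i\<in>K. N (?f i))"
      by (simp_all add: card_image prod.reindex)
    moreover have "(\<Prod>i\<in>K. N (?f i)) = (\<Prod>i\<in>K. if i < 4 then n else m)"
      using \<open>K \<in> Pow {0..<10}\<close> weight by (intro prod.cong) auto
    ultimately show "(if irredundant_cover B (?f ` K) then ?w (?f ` K) else 0) =
        (if irredundant_cover B (?f ` K) then p ^ card K * (\<Prod>i\<in>K. if i < 4 then n else m) else 0)"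
      by simp
  qed
  also have "\<dots> = 3 * m^2 * p^2 + (6*m*n^2 + 12*m^2*n + 4*m^3) * p^3 + n^4 * p^4"
    unfolding B by (rule sum_irredundant_small_covers[OF dist])
  finally show ?thesis .
qed

theorem mainTheorem12:
  fixes X :: "'a set" and \<B> :: "'a set set" and v :: nat and B :: "'a set" and p :: real
  assumes "SQS X \<B> v" and "v \<ge> 8" and "B \<in> \<B>" and "0 \<le> p" and "p \<le> 1"
  defines "r1 \<equiv> real ((v - 1) choose 2) / 3"
      and "r2 \<equiv> (real v - 2) / 2"
  shows "expected_available_repair \<B> B p =
           3 * (r2 - 1)^2 * p^2
         + 2 * (r2 - 1) * (3 * r1^2 - 12 * r1 * r2 + 6 * r1 + 11 * r2^2 - 10 * r2 + 2) * p^3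
         + (r1 - 3 * r2 + 2)^4 * p^4"
proof -
  note S = assms(1) and B = assms(3)
  have "expected_available_repair \<B> B p = (\<Sum>P | minimal_repair_set \<B> B P. p ^ card P)"
    using SQS_finite(2)[OF S] by (rule expected_available_repair_eq_sum)
  also have "\<dots> = (\<Sum>S | irredundant_cover B S. p ^ card S * (\<Prod>s\<in>S. real (trace_count \<B> B s)))"
    using SQS_finite(2)[OF S] SQS_block(3)[OF S B] by (rule sum_minimal_repair_sets)
  also have "\<dots> = 3 * (r2 - 1)^2 * p^2
      + (6 * (r2 - 1) * (r1 - 3 * r2 + 2)^2 + 12 * (r2 - 1)^2 * (r1 - 3 * r2 + 2) + 4 * (r2 - 1)^3) * p^3
      + (r1 - 3 * r2 + 2)^4 * p^4"
    using SQS_block(2)[OF S B] SQS_trace_count_point[OF S B] SQS_trace_count_pair[OF S B]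
      SQS_trace_count_large[OF S B]
    unfolding r1_def r2_def by (intro sum_irredundant_covers_card4) simp_all
  also have "\<dots> = 3 * (r2 - 1)^2 * p^2
         + 2 * (r2 - 1) * (3 * r1^2 - 12 * r1 * r2 + 6 * r1 + 11 * r2^2 - 10 * r2 + 2) * p^3
         + (r1 - 3 * r2 + 2)^4 * p^4"
    by algebra
  finally show ?thesis .
qed

end
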